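(* Let $S = s_1,\ldots,s_n$ be a sequence of nonnegative integers, let $0<\alpha<1$, $\gamma>0$, let $k$ be a positive integer, and let $\epsilon>0$. Suppose $(L^*,\beta^* )$ is an optimal solution of $\textsc{Geo}(\alpha)$ for $S,\alpha,\gamma,k$, and let $(L,\beta)$ be the output of $\textit{GeoAlpha}(S,\alpha,\gamma,k,\epsilon)$. Then \[ \mathrm{score}_{\mathrm{geo}}(L,S;\alpha,\beta,\gamma) \le (1+\epsilon)\,\mathrm{score}_{\mathrm{geo}}(L^*,S;\alpha,\beta^*,\gamma). \]
   Context: A level sequence is $L = \ell_1,\ldots,\ell_n$ of integers with $0\le\ell_i\le k$; set $\ell_0=0$. The penalty is $\mathrm{pen}(x,y)=\max(y-x,0)\,\gamma\log n$. The geometric distribution is $p_{\mathrm{geo}}(s;\lambda) = (1-\lambda)\lambda^s$. For $0<\beta<1$ the score is $\mathrm{score}_{\mathrm{geo}}(L,S;\alpha,\beta,\gamma) = \sum_{i=1}^n\big[-\log p_{\mathrm{geo}}(s_i;\beta\alpha^{\ell_i}) + \mathrm{pen}(\ell_{i-1},\ell_i)\big]$. Problem $\textsc{Geo}(\alpha)$: given $S,\alpha,\gamma,k$, find a level sequence $L$ and $\beta\in(0,1)$ minimizing this score. $\textit{Viterbi}(S,\alpha,\beta,\gamma,k,p_{\mathrm{geo}})$ returns a level sequence minimizing $\mathrm{score}_{\mathrm{geo}}(\cdot,S;\alpha,\beta,\gamma)$ for the fixed $\alpha,\beta$. Algorithm $\textit{GeoAlpha}(S,\alpha,\gamma,k,\epsilon)$: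 let $\mu=\frac1n\sum_i s_i$. If $\mu=0$, return the all-zero level sequence. Otherwise let $\eta=\mu/(\mu+1)$ and $c=1$; while $\eta^c \le \mu/(\mu+1/n)$: set $\beta=\eta^c$, compute $L=\textit{Viterbi}(S,\alpha,\beta,\gamma,k,p_{\mathrm{geo}})$, and set $c \leftarrow c/(1+\epsilon)$. Return the pair $(L,\beta)$ with the smallest score $\mathrm{score}_{\mathrm{geo}}(L,S;\alpha,\beta,\gamma)$ among the tested ones. *)

theory Defs
  imports Complex_Main
begin

text \<open>Lists are 0-indexed, so
 entry i of the list is s_(i+1); the predecessor level of position 0 is l_0 = 0.\<close>

definition level_seq :: "nat \<Rightarrow> nat \<Rightarrow> nat list \<Rightarrow> bool" where
  "level_seq n k L \<longleftrightarrow> length L = n \<and> (\<forall>i<n. L ! i \<le> k)"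

definition pen :: "nat \<Rightarrow> real \<Rightarrow> nat \<Rightarrow> nat \<Rightarrow> real" where
  "pen n \<gamma> x y = max (real y - real x) 0 * \<gamma> * ln (real n)"

definition p_geo :: "nat \<Rightarrow> real \<Rightarrow> real" where
  "p_geo s lam = (1 - lam) * lam ^ s"

definition prev_level :: "nat list \<Rightarrow> nat \<Rightarrow> nat" where
  "prev_level L i = (if i = 0 then 0 else L ! (i - 1))"

definition score_geo :: "nat list \<Rightarrow> nat list \<Rightarrow> real \<Rightarrow> real \<Rightarrow> real \<Rightarrow> real" where
  "score_geo L S \<alpha> \<beta> \<gamma> =
     (\<Sum>i<length S. - ln (p_geo (S ! i) (\<beta> * \<alpha> ^ (L ! i)))
                     + pen (length S) \<gamma> (prev_level L i) (L ! i))"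

definition is_viterbi :: "nat list \<Rightarrow> real \<Rightarrow> real \<Rightarrow> real \<Rightarrow> nat \<Rightarrow> nat list \<Rightarrow> bool" where
  "is_viterbi S \<alpha> \<beta> \<gamma> k L \<longleftrightarrow> level_seq (length S) k L \<and>
     (\<forall>L'. level_seq (length S) k L' \<longrightarrow> score_geo L S \<alpha> \<beta> \<gamma> \<le> score_geo L' S \<alpha> \<beta> \<gamma>)"

definition geo_optimal :: "nat list \<Rightarrow> real \<Rightarrow> real \<Rightarrow> nat \<Rightarrow> nat list \<Rightarrow> real \<Rightarrow> bool" where
  "geo_optimal S \<alpha> \<gamma> k L \<beta> \<longleftrightarrow> level_seq (length S) k L \<and> 0 < \<beta> \<and> \<beta> < 1 \<and>
     (\<forall>L' \<beta>'. level_seq (length S) k L' \<and> 0 < \<beta>' \<and> \<beta>' < 1 \<longrightarrow>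
        score_geo L S \<alpha> \<beta> \<gamma> \<le> score_geo L' S \<alpha> \<beta>' \<gamma>)"

definition mean_seq :: "nat list \<Rightarrow> real" where
  "mean_seq S = (\<Sum>i<length S. real (S ! i)) / real (length S)"

text \<open>In iteration j (j = 0,1,...) of the while loop, c = (1+eps)^(-j) and beta = eta^c.
 The loop runs iteration j iff the guard held in iterations 0..j.\<close>
definition ga_beta :: "nat list \<Rightarrow> real \<Rightarrow> nat \<Rightarrow> real" where
  "ga_beta S \<epsilon> j = (mean_seq S / (mean_seq S + 1)) powr ((1 + \<epsilon>) powr (- real j))"

definition ga_tested :: "nat list \<Rightarrow> real \<Rightarrow> real set" where
  "ga_tested S \<epsilon> = {ga_beta S \<epsilon> j | j. \<forall>i\<le>j.
      ga_beta S \<epsilon> i \<le> mean_seq S / (mean_seq S + 1 / real (length S))}"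

text \<open>Output relation of GeoAlpha, relative to a fixed Viterbi implementation V
 (V beta is the level sequence returned by Viterbi for beta). Ties in the final
 selection may be broken arbitrarily. In the case mu = 0 the algorithm returns
 only the all-zero sequence; the accompanying beta is left unconstrained in (0,1).\<close>
definition geo_alpha_output ::
  "(real \<Rightarrow> nat list) \<Rightarrow> nat list \<Rightarrow> real \<Rightarrow> real \<Rightarrow> nat \<Rightarrow> real \<Rightarrow> nat list \<Rightarrow> real \<Rightarrow> bool" where
  "geo_alpha_output V S \<alpha> \<gamma> k \<epsilon> L \<beta> \<longleftrightarrow>
     (if mean_seq S = 0 then L = replicate (length S) 0 \<and> 0 < \<beta> \<and> \<beta> < 1
      else \<beta> \<in> ga_tested S \<epsilon> \<and> L = V \<beta> \<and>
           (\<forall>\<beta>'\<in>ga_tested S \<epsilon>. score_geo (V \<beta>) S \<alpha> \<beta> \<gamma> \<le> score_geo (V \<beta>') S \<alpha> \<beta>' \<gamma>))"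

end

theory Submission
  imports Defs
begin

(* For fixed levels the score splits into a nonnegative level cost plus a function of
   beta alone, sum_i -ln(1 - beta alpha^l_i) - n mu ln beta. Lowering all levels of an optimum
   by their minimum (and rescaling beta) does not increase the score and creates a level 0;
   then the beta-part decreases below mu/(mu+1) and increases above mu/(mu+1/n), so some
   optimal beta lies in the range swept by GeoAlpha. Its grid eta^c, c = (1+eps)^-j, is
   geometric in ln beta, so some tested beta' <= beta has -ln beta' <= (1+eps)(-ln beta);
   the remaining terms are nonnegative and monotone in beta, so this costs at most a factor
   1+eps. If mu = 0, no optimum exists at all. *)

definition geo_norm_cost :: "nat list \<Rightarrow> real \<Rightarrow> nat list \<Rightarrow> real \<Rightarrow> real" where
  "geo_norm_cost S \<alpha> L b = (\<Sum>i<length S. - ln (1 - b * \<alpha> ^ (L ! i)))"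

definition beta_cost :: "nat list \<Rightarrow> real \<Rightarrow> nat list \<Rightarrow> real \<Rightarrow> real" where
  "beta_cost S \<alpha> L b = geo_norm_cost S \<alpha> L b - real (length S) * mean_seq S * ln b"

definition level_cost :: "nat list \<Rightarrow> real \<Rightarrow> real \<Rightarrow> nat list \<Rightarrow> real" where
  "level_cost S \<alpha> \<gamma> L = (\<Sum>i<length S. - real (S ! i) * real (L ! i) * ln \<alpha>
      + pen (length S) \<gamma> (prev_level L i) (L ! i))"

lemma geo_param_bounds:
  fixes \<alpha> b :: real
  assumes "0 < \<alpha>" "\<alpha> < 1" "0 < b" "b < 1"
  shows "0 < b * \<alpha> ^ l" "b * \<alpha> ^ l < 1"
proof -
  have "0 < \<alpha> ^ l" "\<alpha> ^ l \<le> 1" using assms by (auto simp: power_le_one)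
  moreover have "b * \<alpha> ^ l \<le> b * 1" using \<open>\<alpha> ^ l \<le> 1\<close> assms by (intro mult_left_mono) auto
  ultimately show "b * \<alpha> ^ l < 1" using assms by linarith
  show "0 < b * \<alpha> ^ l" using \<open>0 < \<alpha> ^ l\<close> assms by simp
qed

lemma mean_seq_total: "real (length S) * mean_seq S = (\<Sum>i<length S. real (S ! i))"
  by (cases "S = []") (simp_all add: mean_seq_def)

lemma mean_seq_nonneg: "0 \<le> mean_seq S"
  by (simp add: mean_seq_def sum_nonneg)

lemma mean_seq_threshold_lt_1:
  assumes "0 < mean_seq S"
  shows "mean_seq S / (mean_seq S + 1 / real (length S)) < 1"
proof -
  have "S \<noteq> []" using assms by (auto simp: mean_seq_def)
  then have "0 < 1 / real (length S)" by auto
  then show ?thesis using assms by (subst divide_less_eq_1_pos) linarith+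
qed

lemma score_geo_split:
  assumes "0 < \<alpha>" "\<alpha> < 1" "0 < b" "b < 1"
  shows "score_geo L S \<alpha> b \<gamma> = beta_cost S \<alpha> L b + level_cost S \<alpha> \<gamma> L"
proof -
  have summand: "- ln (p_geo (S ! i) (b * \<alpha> ^ (L ! i))) + pen (length S) \<gamma> (prev_level L i) (L ! i)
    = - ln (1 - b * \<alpha> ^ (L ! i)) - real (S ! i) * ln b
      + (- real (S ! i) * real (L ! i) * ln \<alpha> + pen (length S) \<gamma> (prev_level L i) (L ! i))" for i
  proof -
    define x where "x = b * \<alpha> ^ (L ! i)"
    have "0 < x" "x < 1" unfolding x_def using geo_param_bounds[OF assms] by auto
    then have "ln (p_geo (S ! i) x) = ln (1 - x) + real (S ! i) * ln x"
      by (simp add: p_geo_def ln_mult ln_realpow)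
    then have "ln (p_geo (S ! i) (b * \<alpha> ^ (L ! i)))
        = ln (1 - b * \<alpha> ^ (L ! i)) + real (S ! i) * ln (b * \<alpha> ^ (L ! i))"
      unfolding x_def .
    also have "ln (b * \<alpha> ^ (L ! i)) = ln b + real (L ! i) * ln \<alpha>"
      using assms by (simp add: ln_mult ln_realpow)
    finally show ?thesis by (simp add: algebra_simps)
  qed
  show ?thesis
    unfolding score_geo_def beta_cost_def geo_norm_cost_def level_cost_def mean_seq_total
    by (simp only: summand sum.distrib sum_subtractf sum_distrib_right sum_negf)
qed

lemma level_cost_nonneg:
  assumes "0 < \<alpha>" "\<alpha> < 1" "0 < \<gamma>" "S \<noteq> []"
  shows "0 \<le> level_cost S \<alpha> \<gamma> L"
  unfolding level_cost_def
proof (rule sum_nonneg)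
  fix i
  have "0 \<le> - real (S ! i) * real (L ! i) * ln \<alpha>"
    using assms by (simp add: mult_nonneg_nonpos)
  moreover have "0 \<le> pen (length S) \<gamma> (prev_level L i) (L ! i)"
    unfolding pen_def using assms by (auto simp: Suc_le_eq)
  ultimately show "0 \<le> - real (S ! i) * real (L ! i) * ln \<alpha>
      + pen (length S) \<gamma> (prev_level L i) (L ! i)" by simp
qed

lemma geo_norm_cost_nonneg:
  assumes "0 < \<alpha>" "\<alpha> < 1" "0 < b" "b < 1"
  shows "0 \<le> geo_norm_cost S \<alpha> L b"
  unfolding geo_norm_cost_def
  by (rule sum_nonneg) (use geo_param_bounds[OF assms] in \<open>simp add: less_imp_le\<close>)

lemma geo_norm_cost_mono:
  assumes "0 < \<alpha>" "\<alpha> < 1" "0 < b1" "b1 \<le> b2" "b2 < 1"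
  shows "geo_norm_cost S \<alpha> L b1 \<le> geo_norm_cost S \<alpha> L b2"
  unfolding geo_norm_cost_def
proof (rule sum_mono)
  fix i
  have "b2 * \<alpha> ^ (L ! i) < 1" using geo_param_bounds assms by auto
  moreover have "b1 * \<alpha> ^ (L ! i) \<le> b2 * \<alpha> ^ (L ! i)" using assms by simp
  ultimately show "- ln (1 - b1 * \<alpha> ^ (L ! i)) \<le> - ln (1 - b2 * \<alpha> ^ (L ! i))" by simp
qed

lemma geo_norm_cost_strict_mono:
  assumes "0 < \<alpha>" "\<alpha> < 1" "0 < b1" "b1 < b2" "b2 < 1" "S \<noteq> []"
  shows "geo_norm_cost S \<alpha> L b1 < geo_norm_cost S \<alpha> L b2"
  unfolding geo_norm_cost_def
proof (rule sum_strict_mono)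
  fix i
  have "b2 * \<alpha> ^ (L ! i) < 1" "0 < b1 * \<alpha> ^ (L ! i)" using geo_param_bounds assms by auto
  moreover have "b1 * \<alpha> ^ (L ! i) < b2 * \<alpha> ^ (L ! i)" using assms by simp
  ultimately show "- ln (1 - b1 * \<alpha> ^ (L ! i)) < - ln (1 - b2 * \<alpha> ^ (L ! i))" by simp
qed (use assms in auto)

lemma beta_cost_has_derivative:
  assumes "0 < \<alpha>" "\<alpha> < 1" "0 < b" "b < 1"
  shows "(beta_cost S \<alpha> L has_real_derivative
     (\<Sum>i<length S. \<alpha> ^ (L ! i) / (1 - b * \<alpha> ^ (L ! i)))
       - real (length S) * mean_seq S / b) (at b)"
proof -
  have "((\<lambda>x. - ln (1 - x * \<alpha> ^ (L ! i))) has_real_derivative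
      \<alpha> ^ (L ! i) / (1 - b * \<alpha> ^ (L ! i))) (at b)" for i
    using geo_param_bounds[OF assms, of "L ! i"]
    by (auto intro!: derivative_eq_intros simp: field_simps)
  then have "(geo_norm_cost S \<alpha> L has_real_derivative
      (\<Sum>i<length S. \<alpha> ^ (L ! i) / (1 - b * \<alpha> ^ (L ! i)))) (at b)"
    unfolding geo_norm_cost_def by (intro DERIV_sum)
  then show ?thesis
    unfolding beta_cost_def using assms
    by (auto intro!: derivative_eq_intros simp: field_simps)
qed

lemma beta_cost_antimono_below:
  assumes "0 < \<alpha>" "\<alpha> < 1" "0 < b1" "b1 \<le> b2" "b2 \<le> mean_seq S / (mean_seq S + 1)"
  shows "beta_cost S \<alpha> L b2 \<le> beta_cost S \<alpha> L b1"
proof (rule DERIV_nonpos_imp_nonincreasing[OF assms(4)])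
  fix x assume x: "b1 \<le> x" "x \<le> b2"
  define \<mu> where "\<mu> = mean_seq S"
  have \<mu>: "0 \<le> \<mu>" unfolding \<mu>_def by (rule mean_seq_nonneg)
  have x0: "0 < x" using x assms by simp
  have "x * (\<mu> + 1) \<le> b2 * (\<mu> + 1)" using x \<mu> by (intro mult_right_mono) auto
  also have "\<dots> \<le> \<mu>" using assms \<mu> by (simp add: \<mu>_def field_simps)
  finally have x\<mu>: "x * (\<mu> + 1) \<le> \<mu>" .
  have x1: "x < 1"
  proof (rule ccontr)
    assume "\<not> x < 1"
    then have "1 * \<mu> \<le> x * \<mu>" using \<mu> by (intro mult_right_mono) auto
    then show False using x\<mu> x0 by (simp add: algebra_simps)
  qed
  have "(\<Sum>i<length S. \<alpha> ^ (L ! i) / (1 - x * \<alpha> ^ (L ! i))) \<le> (\<Sum>i<length S. 1 / (1 - x))"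
  proof (rule sum_mono)
    fix i
    have "0 < \<alpha> ^ (L ! i)" "\<alpha> ^ (L ! i) \<le> 1" using assms by (auto simp: power_le_one)
    then show "\<alpha> ^ (L ! i) / (1 - x * \<alpha> ^ (L ! i)) \<le> 1 / (1 - x)"
      using geo_param_bounds[OF assms(1,2) x0 x1, of "L ! i"] x0 x1
      by (simp add: divide_simps algebra_simps)
  qed
  also have "\<dots> = real (length S) * (1 / (1 - x))" by simp
  also have "\<dots> \<le> real (length S) * (\<mu> / x)"
    using x0 x1 x\<mu> by (intro mult_left_mono) (simp_all add: divide_simps algebra_simps)
  finally show "\<exists>y. (beta_cost S \<alpha> L has_real_derivative y) (at x) \<and> y \<le> 0"
    using beta_cost_has_derivative[OF assms(1,2) x0 x1] by (intro exI conjI) (auto simp: \<mu>_def)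
qed

lemma beta_cost_mono_above:
  assumes "0 < \<alpha>" "\<alpha> < 1" "0 < mean_seq S"
    and "mean_seq S / (mean_seq S + 1 / real (length S)) \<le> b1" "b1 \<le> b2" "b2 < 1"
    and "i0 < length S" "L ! i0 = 0"
  shows "beta_cost S \<alpha> L b1 \<le> beta_cost S \<alpha> L b2"
proof (rule DERIV_nonneg_imp_nondecreasing[OF assms(5)])
  fix x assume x: "b1 \<le> x" "x \<le> b2"
  define \<mu> where "\<mu> = mean_seq S"
  define n where "n = real (length S)"
  have ne: "S \<noteq> []" using assms(7) by auto
  have n: "0 < n" using ne by (simp add: n_def)
  have \<mu>: "0 < \<mu>" using assms by (simp add: \<mu>_def)
  have "\<mu> / (\<mu> + 1 / n) = \<mu> * n / (\<mu> * n + 1)" using n by (simp add: field_simps)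
  then have "\<mu> * n / (\<mu> * n + 1) \<le> x" using x assms by (simp add: \<mu>_def n_def)
  then have x\<mu>: "\<mu> * n \<le> x * (\<mu> * n + 1)" using \<mu> n
    by (subst (asm) pos_divide_le_eq) (simp_all add: add_pos_pos)
  have "0 < x * (\<mu> * n + 1)" using \<mu> n x\<mu> by (smt (verit) mult_pos_pos)
  moreover have "0 < \<mu> * n + 1" using \<mu> n by (simp add: add_pos_pos)
  ultimately have x0: "0 < x" by (simp add: zero_less_mult_iff)
  have x1: "x < 1" using x assms by simp
  have terms_nonneg: "0 \<le> \<alpha> ^ (L ! i) / (1 - x * \<alpha> ^ (L ! i))" for i
    using geo_param_bounds[OF assms(1,2) x0 x1, of "L ! i"] assms(1) by simp
  have "n * \<mu> / x \<le> 1 / (1 - x)"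
    using x0 x1 x\<mu> by (simp add: divide_simps algebra_simps)
  also have "\<dots> = \<alpha> ^ (L ! i0) / (1 - x * \<alpha> ^ (L ! i0))" using assms by simp
  also have "\<dots> \<le> (\<Sum>i<length S. \<alpha> ^ (L ! i) / (1 - x * \<alpha> ^ (L ! i)))"
    by (rule member_le_sum) (use assms(7) terms_nonneg in auto)
  finally show "\<exists>y. (beta_cost S \<alpha> L has_real_derivative y) (at x) \<and> y \<ge> 0"
    using beta_cost_has_derivative[OF assms(1,2) x0 x1]
    using ne by (intro exI conjI) (auto simp: \<mu>_def n_def)
qed

lemma score_geo_le_scaled:
  assumes "0 < \<alpha>" "\<alpha> < 1" "0 < \<gamma>" "S \<noteq> []" "0 \<le> \<epsilon>"
    and "0 < b1" "b1 \<le> b0" "b0 < 1" "- ln b1 \<le> (1 + \<epsilon>) * - ln b0"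
  shows "score_geo L S \<alpha> b1 \<gamma> \<le> (1 + \<epsilon>) * score_geo L S \<alpha> b0 \<gamma>"
proof -
  define G where "G b = geo_norm_cost S \<alpha> L b" for b
  define T where "T = real (length S) * mean_seq S"
  define R where "R = level_cost S \<alpha> \<gamma> L"
  have T: "0 \<le> T" unfolding T_def by (simp add: mean_seq_nonneg)
  have R: "0 \<le> R" unfolding R_def by (rule level_cost_nonneg) (use assms in auto)
  have G: "G b1 \<le> G b0" "0 \<le> G b0" unfolding G_def
    using geo_norm_cost_mono geo_norm_cost_nonneg assms by (auto intro: less_le_trans)
  have "T * - ln b1 \<le> T * ((1 + \<epsilon>) * - ln b0)" using assms(9) T by (rule mult_left_mono)
  moreover have "G b0 \<le> (1 + \<epsilon>) * G b0" "R \<le> (1 + \<epsilon>) * R"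
    using G R assms(5) by (simp_all add: algebra_simps)
  ultimately have "G b1 + T * - ln b1 + R \<le> (1 + \<epsilon>) * (G b0 + T * - ln b0 + R)"
    using G by (simp add: algebra_simps)
  then show ?thesis
    using score_geo_split[of \<alpha> b1 L S \<gamma>] score_geo_split[of \<alpha> b0 L S \<gamma>] assms
    by (simp add: beta_cost_def G_def T_def R_def)
qed

lemma score_geo_lower_levels:
  assumes "0 < \<alpha>" "\<alpha> < 1" "0 < b" "b < 1" "0 < \<gamma>" "S \<noteq> []"
    and "length L = length S" "\<forall>i<length S. m \<le> L ! i"
  shows "score_geo (map (\<lambda>l. l - m) L) S \<alpha> (b * \<alpha> ^ m) \<gamma> \<le> score_geo L S \<alpha> b \<gamma>"
  unfolding score_geo_def
proof (rule sum_mono)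
  fix i assume i: "i \<in> {..<length S}"
  have mi: "m \<le> L ! i" using assms(8) i by auto
  have same_param: "b * \<alpha> ^ m * \<alpha> ^ (map (\<lambda>l. l - m) L ! i) = b * \<alpha> ^ (L ! i)"
    using mi i assms(7) by (simp add: power_add[symmetric])
  \<comment> \<open>Level differences are unchanged except at i = 0, whose predecessor level stays 0.\<close>
  have "real (L ! i - m) - real (prev_level (map (\<lambda>l. l - m) L) i)
      \<le> real (L ! i) - real (prev_level L i)"
    using i mi assms(7,8) by (cases "i = 0") (auto simp: prev_level_def of_nat_diff)
  moreover have "0 \<le> ln (real (length S))" using assms(6) by (simp add: Suc_le_eq)
  ultimately have "pen (length S) \<gamma> (prev_level (map (\<lambda>l. l - m) L) i) (map (\<lambda>l. l - m) L ! i)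
      \<le> pen (length S) \<gamma> (prev_level L i) (L ! i)"
    unfolding pen_def using i assms(5,7) by (auto intro!: mult_right_mono)
  then show "- ln (p_geo (S ! i) (b * \<alpha> ^ m * \<alpha> ^ (map (\<lambda>l. l - m) L ! i)))
      + pen (length S) \<gamma> (prev_level (map (\<lambda>l. l - m) L) i) (map (\<lambda>l. l - m) L ! i)
      \<le> - ln (p_geo (S ! i) (b * \<alpha> ^ (L ! i))) + pen (length S) \<gamma> (prev_level L i) (L ! i)"
    unfolding same_param by linarith
qed

lemma exists_zero_level_score_le:
  assumes "0 < \<alpha>" "\<alpha> < 1" "0 < b" "b < 1" "0 < \<gamma>" "S \<noteq> []"
    and "level_seq (length S) k L"
  obtains L' b' i0 where "level_seq (length S) k L'" "i0 < length S" "L' ! i0 = 0"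
    "0 < b'" "b' < 1" "score_geo L' S \<alpha> b' \<gamma> \<le> score_geo L S \<alpha> b \<gamma>"
proof -
  define m where "m = Min (set L)"
  have len: "length L = length S" using assms(7) by (simp add: level_seq_def)
  have "m \<in> set L" unfolding m_def using len assms(6) by (intro Min_in) auto
  then obtain i0 where i0: "i0 < length S" "L ! i0 = m" using len by (auto simp: in_set_conv_nth)
  have le: "\<forall>i<length S. m \<le> L ! i" unfolding m_def using len by auto
  show ?thesis
  proof
    show "level_seq (length S) k (map (\<lambda>l. l - m) L)"
      using assms(7) by (auto simp: level_seq_def)
    show "map (\<lambda>l. l - m) L ! i0 = 0" using i0 len by simp
    show "0 < b * \<alpha> ^ m" "b * \<alpha> ^ m < 1" using geo_param_bounds assms by auto
    show "score_geo (map (\<lambda>l. l - m) L) S \<alpha> (b * \<alpha> ^ m) \<gamma> \<le> score_geo L S \<alpha> b \<gamma>"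
      by (rule score_geo_lower_levels) (use assms len le in auto)
  qed (fact i0)
qed

lemma score_geo_clamp_beta:
  assumes "0 < \<alpha>" "\<alpha> < 1" "0 < mean_seq S" "0 < b" "b < 1"
    and "i0 < length S" "L ! i0 = 0"
  obtains b0 where "mean_seq S / (mean_seq S + 1) \<le> b0"
    "b0 \<le> mean_seq S / (mean_seq S + 1 / real (length S))"
    "score_geo L S \<alpha> b0 \<gamma> \<le> score_geo L S \<alpha> b \<gamma>"
proof -
  define \<eta> where "\<eta> = mean_seq S / (mean_seq S + 1)"
  define B where "B = mean_seq S / (mean_seq S + 1 / real (length S))"
  have n: "1 \<le> real (length S)" using assms(6) by simp
  have \<eta>: "0 < \<eta>" unfolding \<eta>_def using assms(3) by simp
  have "\<eta> \<le> B" unfolding \<eta>_def B_def using assms(3) n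
    by (intro divide_left_mono) (auto simp: divide_le_eq intro!: mult_pos_pos add_pos_pos)
  have B: "B < 1" unfolding B_def using assms(3) by (rule mean_seq_threshold_lt_1)
  have split: "score_geo L S \<alpha> x \<gamma> = beta_cost S \<alpha> L x + level_cost S \<alpha> \<gamma> L"
    if "0 < x" "x < 1" for x using score_geo_split assms(1,2) that by blast
  consider "b < \<eta>" | "\<eta> \<le> b" "b \<le> B" | "B < b" by linarith
  then show ?thesis
  proof cases
    case 1
    then have "beta_cost S \<alpha> L \<eta> \<le> beta_cost S \<alpha> L b"
      by (intro beta_cost_antimono_below) (use assms in \<open>auto simp: \<eta>_def\<close>)
    then show ?thesis using that[of \<eta>] \<open>\<eta> \<le> B\<close> \<eta> B split assms(4,5)
      by (simp add: \<eta>_def B_def)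
  next
    case 3
    then have "beta_cost S \<alpha> L B \<le> beta_cost S \<alpha> L b"
      by (intro beta_cost_mono_above) (use assms in \<open>auto simp: B_def\<close>)
    then show ?thesis using that[of B] \<open>\<eta> \<le> B\<close> \<eta> B split assms(4,5)
      by (simp add: \<eta>_def B_def)
  qed (use that in \<open>auto simp: \<eta>_def B_def\<close>)
qed

lemma exists_inverse_power_between:
  fixes c q :: real
  assumes "0 < c" "c \<le> 1" "1 < q"
  obtains j :: nat where "c \<le> 1 / q ^ j" "1 / q ^ j \<le> q * c"
proof -
  obtain N where "1 / c < q ^ N" using real_arch_pow[OF assms(3)] by blast
  define N0 where "N0 = (LEAST N. 1 / c < q ^ N)"
  have N0: "1 / c < q ^ N0" unfolding N0_def by (rule LeastI) fact
  have "N0 \<noteq> 0"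
  proof
    assume "N0 = 0"
    with N0 assms show False by (simp add: field_simps)
  qed
  then obtain j where j: "N0 = Suc j" by (cases N0) auto
  have "\<not> 1 / c < q ^ j"
    using not_less_Least[of j "\<lambda>N. 1 / c < q ^ N"] j by (simp add: N0_def)
  moreover have "0 < q ^ j" using assms by simp
  ultimately show ?thesis
    using that[of j] N0 j assms by (simp add: field_simps)
qed

lemma ln_ga_beta:
  assumes "0 < mean_seq S" "0 < \<epsilon>"
  shows "ln (ga_beta S \<epsilon> j) = ln (mean_seq S / (mean_seq S + 1)) / (1 + \<epsilon>) ^ j"
proof -
  have "(1 + \<epsilon>) powr (- real j) = 1 / (1 + \<epsilon>) ^ j"
    using assms by (simp add: powr_minus powr_realpow divide_inverse)
  then show ?thesis
    unfolding ga_beta_def using assms by (simp add: ln_powr)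
qed

lemma ga_tested_approx:
  assumes "0 < mean_seq S" "0 < \<epsilon>"
    and "mean_seq S / (mean_seq S + 1) \<le> b0"
    and "b0 \<le> mean_seq S / (mean_seq S + 1 / real (length S))"
  obtains b where "b \<in> ga_tested S \<epsilon>" "0 < b" "b \<le> b0" "- ln b \<le> (1 + \<epsilon>) * - ln b0"
proof -
  define \<eta> where "\<eta> = mean_seq S / (mean_seq S + 1)"
  define B where "B = mean_seq S / (mean_seq S + 1 / real (length S))"
  have "B < 1" unfolding B_def using assms(1) by (rule mean_seq_threshold_lt_1)
  have \<eta>: "0 < \<eta>" "\<eta> < 1" unfolding \<eta>_def using assms(1) by auto
  then have ln\<eta>: "ln \<eta> < 0" by simp
  have b0: "0 < b0" "b0 < 1" using assms(3,4) \<eta> \<open>B < 1\<close> by (auto simp: \<eta>_def B_def)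
  define c where "c = ln b0 / ln \<eta>"
  have "ln \<eta> \<le> ln b0" using assms(3) \<eta> by (simp add: \<eta>_def)
  then have "0 < c" "c \<le> 1" unfolding c_def using ln\<eta> b0
    by (auto simp: divide_simps)
  then obtain j where j: "c \<le> 1 / (1 + \<epsilon>) ^ j" "1 / (1 + \<epsilon>) ^ j \<le> (1 + \<epsilon>) * c"
    using exists_inverse_power_between[of c "1 + \<epsilon>"] assms(2) by auto
  have ln_beta: "ln (ga_beta S \<epsilon> i) = ln \<eta> * (1 / (1 + \<epsilon>) ^ i)" for i
    using ln_ga_beta[OF assms(1,2)] by (simp add: \<eta>_def)
  have pos: "0 < ga_beta S \<epsilon> i" for i
    using \<eta> by (simp add: ga_beta_def \<eta>_def[symmetric])
  have below: "ga_beta S \<epsilon> i \<le> b0" if "i \<le> j" for i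
  proof -
    have "1 / (1 + \<epsilon>) ^ j \<le> 1 / (1 + \<epsilon>) ^ i"
      using that assms(2) by (intro divide_left_mono power_increasing) auto
    then have "ln \<eta> * (1 / (1 + \<epsilon>) ^ i) \<le> ln \<eta> * c"
      using j(1) ln\<eta> by (intro mult_left_mono_neg) auto
    also have "ln \<eta> * c = ln b0" unfolding c_def using ln\<eta> by simp
    finally show ?thesis using ln_beta pos b0 by (metis ln_le_cancel_iff)
  qed
  show ?thesis
  proof
    show "ga_beta S \<epsilon> j \<in> ga_tested S \<epsilon>"
      unfolding ga_tested_def using below assms(4) by force
    have "- ln \<eta> * (1 / (1 + \<epsilon>) ^ j) \<le> - ln \<eta> * ((1 + \<epsilon>) * c)"
      using j(2) ln\<eta> by (intro mult_left_mono) auto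
    then show "- ln (ga_beta S \<epsilon> j) \<le> (1 + \<epsilon>) * - ln b0"
      unfolding ln_beta c_def using ln\<eta> by simp
  qed (use pos below in auto)
qed

lemma no_geo_optimal_if_mean_zero:
  assumes "0 < \<alpha>" "\<alpha> < 1" "S \<noteq> []" "mean_seq S = 0"
  shows "\<not> geo_optimal S \<alpha> \<gamma> k L b"
proof
  assume opt: "geo_optimal S \<alpha> \<gamma> k L b"
  then have b: "0 < b" "b < 1" and L: "level_seq (length S) k L"
    by (auto simp: geo_optimal_def)
  have "geo_norm_cost S \<alpha> L (b / 2) < geo_norm_cost S \<alpha> L b"
    using b assms by (intro geo_norm_cost_strict_mono) auto
  then have "score_geo L S \<alpha> (b / 2) \<gamma> < score_geo L S \<alpha> b \<gamma>"
    using score_geo_split[OF assms(1,2), of "b / 2" L S \<gamma>] score_geo_split[OF assms(1,2) b, of L S \<gamma>]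
      b assms(4) by (simp add: beta_cost_def)
  moreover have "score_geo L S \<alpha> b \<gamma> \<le> score_geo L S \<alpha> (b / 2) \<gamma>"
    using opt L b unfolding geo_optimal_def by simp
  ultimately show False by simp
qed

theorem proposition2:
  fixes S :: "nat list" and \<alpha> \<gamma> \<epsilon> \<beta> \<beta>s :: real and k :: nat
    and L Ls :: "nat list" and V :: "real \<Rightarrow> nat list"
  assumes "S \<noteq> []"
    and "0 < \<alpha>" and "\<alpha> < 1" and "0 < \<gamma>" and "0 < k" and "0 < \<epsilon>"
    and "\<forall>b. 0 < b \<and> b < 1 \<longrightarrow> is_viterbi S \<alpha> b \<gamma> k (V b)"
    and "geo_optimal S \<alpha> \<gamma> k Ls \<beta>s"
    and "geo_alpha_output V S \<alpha> \<gamma> k \<epsilon> L \<beta>"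
  shows "score_geo L S \<alpha> \<beta> \<gamma> \<le> (1 + \<epsilon>) * score_geo Ls S \<alpha> \<beta>s \<gamma>"
proof -
  note \<alpha> = assms(2,3)
  have \<mu>: "0 < mean_seq S"
    using no_geo_optimal_if_mean_zero[OF \<alpha> assms(1)] mean_seq_nonneg assms(8)
    by (metis order_less_le)
  from assms(8) have "level_seq (length S) k Ls" "0 < \<beta>s" "\<beta>s < 1"
    by (auto simp: geo_optimal_def)
  then obtain L' b' i0 where L': "level_seq (length S) k L'" "i0 < length S" "L' ! i0 = 0"
      and b': "0 < b'" "b' < 1" and shift: "score_geo L' S \<alpha> b' \<gamma> \<le> score_geo Ls S \<alpha> \<beta>s \<gamma>"
    using exists_zero_level_score_le[OF \<alpha> _ _ assms(4,1)] by metis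
  obtain b0 where b0: "mean_seq S / (mean_seq S + 1) \<le> b0"
      "b0 \<le> mean_seq S / (mean_seq S + 1 / real (length S))"
      and clamp: "score_geo L' S \<alpha> b0 \<gamma> \<le> score_geo L' S \<alpha> b' \<gamma>"
    using score_geo_clamp_beta[OF \<alpha> \<mu> b' L'(2,3)] by metis
  have "b0 < 1" using b0(2) mean_seq_threshold_lt_1[OF \<mu>] by linarith
  obtain b where b: "b \<in> ga_tested S \<epsilon>" "0 < b" "b \<le> b0"
      and ln_b: "- ln b \<le> (1 + \<epsilon>) * - ln b0"
    using ga_tested_approx[OF \<mu> assms(6) b0] by metis
  have "score_geo L S \<alpha> \<beta> \<gamma> \<le> score_geo (V b) S \<alpha> b \<gamma>"
    using assms(9) \<mu> b(1) unfolding geo_alpha_output_def by auto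
  also have "\<dots> \<le> score_geo L' S \<alpha> b \<gamma>"
    using assms(7) b \<open>b0 < 1\<close> L'(1) unfolding is_viterbi_def by auto
  also have "\<dots> \<le> (1 + \<epsilon>) * score_geo L' S \<alpha> b0 \<gamma>"
    using score_geo_le_scaled[OF \<alpha> assms(4,1) _ b(2,3) \<open>b0 < 1\<close> ln_b] assms(6) by simp
  also have "\<dots> \<le> (1 + \<epsilon>) * score_geo Ls S \<alpha> \<beta>s \<gamma>"
    using clamp shift assms(6) by (intro mult_left_mono) auto
  finally show ?thesis .
qed

end
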